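(* Assume (A1) the parameter space $\Theta$ of $\theta=(B,\Omega)$ is compact and (A2) the variational parameter space $\Psi$ is bounded. Then: (i) $\theta\mapsto J(\theta,\psi)$ is continuous for almost every $Y$; (ii) $\widehat\theta^{\mathrm{ve}}$ lies in a compact set with probability tending to one; (iii) $J$ has a measurable and $p_{\theta^\star}$-integrable local envelope: for every $\delta>0$ and every $\theta'\in\Theta$, the function $Y\mapsto\sup_{\psi\in\Psi}\sup_{\theta\in\mathcal B_\delta(\theta')\cap\Theta}J(\theta,\psi)$ is $p_{\theta^\star}$-integrable.
   Context: PLN model: latent $Z\sim\mathcal N_p(0,\Omega^{-1})$, and given $Z$, coordinates $Y_j\sim\mathcal P(\exp(o_j+x^\top B_j+Z_j))$ independently, for a generic observation $Y\in\mathbb N^p$ with fixed covariate $x\in\mathbb R^m$ and offset $o\in\mathbb R^p$; $B\in\mathcal M_{m,p}(\mathbb R)$ with columns $B_j$, $\Omega$ symmetric positive definite. Data are generated under a true parameter $\theta^\star\in\Theta$ with law $p_{\theta^\star}$. Variational parameters $\psi=(m,s)\in\Psi\subset\mathbb R^p\times(0,\infty)^p$. Single-observation ELBO: $J(\theta,\psi)=Y^\top(o+m+B^\top x)-\tilde a^\top1_p-\sum_j\log(Y_j!)+\frac12\log|\Omega|-\frac12m^\top\Omega m-\frac12\mathrm{diag}(\Omega)^\top s^2+\sum_j\log s_j+\frac p2$, $\tilde a_j=\exp(o_j+x^\top B_j+m_j+s_j^2/2)$. The variational estimator $\widehat\theta^{\mathrm{ve}}$ is the $\theta$-part of a maximizer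 over $\Theta\times\Psi^n$ of $\sum_{i=1}^nJ_i(\theta,\psi_i)$ for $n$ independent observations. $\mathcal B_\delta(\theta')$ is the ball of radius $\delta$ around $\theta'$. *)

theory Defs
  imports "HOL-Probability.Probability"
begin

definition poisson_pmf_val :: "real \<Rightarrow> nat \<Rightarrow> real" where
  "poisson_pmf_val l k = exp (- l) * l ^ k / fact k"

text \<open>Density of the centred Gaussian N(0, Omega^{-1}) on R^p (Omega = precision matrix).\<close>
definition gauss_prec_density :: "real^'p^'p \<Rightarrow> real^'p \<Rightarrow> real" where
  "gauss_prec_density \<Omega> z =
     (2 * pi) powr (- real CARD('p) / 2) * sqrt (det \<Omega>) * exp (- (z \<bullet> (\<Omega> *v z)) / 2)"

text \<open>PLN probability mass function of Y, for parameter (B, Omega), covariate x, offset o.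
  B is an m x p matrix (rows indexed by 'm, columns B_j indexed by 'p);
  x^T B_j = (transpose B *v x) $ j.\<close>
definition pln_pmf :: "real^'m \<Rightarrow> real^'p \<Rightarrow> ((real^'p^'m) \<times> (real^'p^'p)) \<Rightarrow> nat^'p \<Rightarrow> real" where
  "pln_pmf x off \<theta> Y = (case \<theta> of (B, \<Omega>) \<Rightarrow>
     integral\<^sup>L lborel (\<lambda>z::real^'p.
        (\<Prod>j\<in>UNIV. poisson_pmf_val (exp (off $ j + (transpose B *v x) $ j + z $ j)) (Y $ j))
        * gauss_prec_density \<Omega> z))"

definition pln_law :: "real^'m \<Rightarrow> real^'p \<Rightarrow> ((real^'p^'m) \<times> (real^'p^'p)) \<Rightarrow> (nat^'p) measure" where
  "pln_law x off \<theta> = density (count_space UNIV) (\<lambda>Y. ennreal (pln_pmf x off \<theta> Y))"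

definition pln_sample :: "real^'m \<Rightarrow> real^'p \<Rightarrow> ((real^'p^'m) \<times> (real^'p^'p)) \<Rightarrow> nat \<Rightarrow> (nat \<Rightarrow> nat^'p) measure" where
  "pln_sample x off \<theta> n = PiM {..<n} (\<lambda>_. pln_law x off \<theta>)"

definition spd :: "real^'p^'p \<Rightarrow> bool" where
  "spd \<Omega> \<longleftrightarrow> transpose \<Omega> = \<Omega> \<and> (\<forall>v. v \<noteq> 0 \<longrightarrow> v \<bullet> (\<Omega> *v v) > 0)"

definition pln_elbo :: "real^'m \<Rightarrow> real^'p \<Rightarrow> nat^'p \<Rightarrow> ((real^'p^'m) \<times> (real^'p^'p)) \<Rightarrow> ((real^'p) \<times> (real^'p)) \<Rightarrow> real" where
  "pln_elbo x off Y \<theta> \<psi> = (case \<theta> of (B, \<Omega>) \<Rightarrow> case \<psi> of (m, s) \<Rightarrow>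
       (\<chi> j. real (Y $ j)) \<bullet> (off + m + transpose B *v x)
     - (\<Sum>j\<in>UNIV. exp (off $ j + (transpose B *v x) $ j + m $ j + (s $ j)^2 / 2))
     - (\<Sum>j\<in>UNIV. ln (fact (Y $ j)))
     + ln (det \<Omega>) / 2
     - (m \<bullet> (\<Omega> *v m)) / 2
     - (\<Sum>j\<in>UNIV. \<Omega> $ j $ j * (s $ j)^2) / 2
     + (\<Sum>j\<in>UNIV. ln (s $ j))
     + real CARD('p) / 2)"

definition is_ve :: "real^'m \<Rightarrow> real^'p \<Rightarrow> ((real^'p^'m) \<times> (real^'p^'p)) set \<Rightarrow> ((real^'p) \<times> (real^'p)) set
    \<Rightarrow> nat \<Rightarrow> (nat \<Rightarrow> nat^'p) \<Rightarrow> ((real^'p^'m) \<times> (real^'p^'p)) \<Rightarrow> bool" where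
  "is_ve x off \<Theta> \<Psi> n ys \<theta> \<longleftrightarrow> \<theta> \<in> \<Theta> \<and>
     (\<exists>\<psi>s. (\<forall>i<n. \<psi>s i \<in> \<Psi>) \<and>
        (\<forall>\<theta>'\<in>\<Theta>. \<forall>\<psi>s'. (\<forall>i<n. \<psi>s' i \<in> \<Psi>) \<longrightarrow>
            (\<Sum>i<n. pln_elbo x off (ys i) \<theta>' (\<psi>s' i)) \<le> (\<Sum>i<n. pln_elbo x off (ys i) \<theta> (\<psi>s i))))"

end

theory Submission
  imports Defs
begin

text \<open>Part (i) holds for every \<open>Y\<close>: the ELBO is continuous in \<open>\<theta>\<close> wherever \<open>det \<Omega> > 0\<close>.
  Part (ii) holds with \<open>K = \<Theta>\<close>, since the estimator lies in the compact \<open>\<Theta>\<close> by definition;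
  its only content is that the sample law is a probability measure, i.e. that the Gaussian density
  integrates to one. This follows by symmetric Gaussian elimination: each elimination step is a shear,
  which has determinant one and preserves Lebesgue measure.
  For part (iii), dropping the nonpositive terms of \<open>J\<close> and using the boundedness of \<open>\<Theta>\<close> and
  \<open>\<Psi>\<close> gives \<open>J \<le> a |Y| + b\<close> uniformly, while the envelope dominates \<open>J\<close> at one fixed
  parameter, which is at least \<open>- a' |Y| - \<Sum>\<^sub>j log Y\<^sub>j! - b'\<close>. Both bounds are
  \<open>O(1 + \<Sum>\<^sub>j Y\<^sub>j\<^sup>2)\<close>, and \<open>Y\<close> has finite second moments: given \<open>Z\<close>, the second factorial
  moment of \<open>Y\<^sub>j\<close> is \<open>exp (2 (o\<^sub>j + x\<^sup>T B\<^sub>j + Z\<^sub>j))\<close>, whose Gaussian expectation is finite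
  because \<open>\<Omega>\<close> is coercive.\<close>

section \<open>Gaussian integrals\<close>

lemma nn_integral_lborel_prod_components:
  fixes f :: "'p::finite \<Rightarrow> real \<Rightarrow> ennreal"
  assumes [measurable]: "\<And>i. f i \<in> borel_measurable borel"
  shows "(\<integral>\<^sup>+z. (\<Prod>i\<in>UNIV. f i (z$i)) \<partial>(lborel::(real^'p) measure)) = (\<Prod>i\<in>UNIV. \<integral>\<^sup>+t. f i t \<partial>lborel)"
proof -
  have Basis: "(Basis :: (real^'p) set) = range (\<lambda>i. axis i 1)"
    by (auto simp: Basis_vec_def)
  have inj: "inj (\<lambda>i::'p. axis i (1::real))"
    by (auto simp: inj_def axis_eq_axis)
  define F where "F b = f (SOME i. b = axis i (1::real))" for b :: "real^'p"
  have F_axis: "F (axis i 1) = f i" for i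
    unfolding F_def by (rule arg_cong[where f=f]) (rule some_equality, auto simp: axis_eq_axis)
  have "(\<integral>\<^sup>+z. (\<Prod>b\<in>Basis. F b (z \<bullet> b)) \<partial>(lborel::(real^'p) measure)) = (\<Prod>b\<in>Basis. \<integral>\<^sup>+t. F b t \<partial>lborel)"
    by (rule nn_integral_lborel_prod) (auto simp: Basis F_axis)
  then show ?thesis
    by (simp add: Basis prod.reindex[OF inj] F_axis inner_axis)
qed

lemma nn_integral_exp_neg_square:
  fixes a :: real
  assumes "a > 0"
  shows "(\<integral>\<^sup>+t. ennreal (exp (- (a * t\<^sup>2 / 2))) \<partial>lborel) = ennreal (sqrt (2 * pi / a))"
proof -
  define \<sigma> where "\<sigma> = 1 / sqrt a"
  have "\<sigma> > 0"
    using assms by (simp add: \<sigma>_def)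
  have "exp (- (a * t\<^sup>2 / 2)) = sqrt (2 * pi / a) * normal_density 0 \<sigma> t" for t
    using assms by (simp add: normal_density_def \<sigma>_def power_divide real_sqrt_divide field_simps)
  then have "(\<integral>\<^sup>+t. ennreal (exp (- (a * t\<^sup>2 / 2))) \<partial>lborel)
      = ennreal (sqrt (2 * pi / a)) * (\<integral>\<^sup>+t. ennreal (normal_density 0 \<sigma> t) \<partial>lborel)"
    using assms by (simp add: ennreal_mult nn_integral_cmult)
  also have "(\<integral>\<^sup>+t. ennreal (normal_density 0 \<sigma> t) \<partial>lborel) = 1"
    using \<open>\<sigma> > 0\<close> by (subst nn_integral_eq_integral) auto
  finally show ?thesis
    by simp
qed

lemma quadratic_form_eq_double_sum:
  fixes A :: "real^'n^'n"
  shows "z \<bullet> (A *v z) = (\<Sum>i\<in>UNIV. \<Sum>j\<in>UNIV. z$i * A$i$j * z$j)"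
  by (simp add: inner_vec_def matrix_vector_mult_def sum_distrib_left mult.assoc)

lemma borel_measurable_quadratic_form[measurable]:
  "(\<lambda>z::real^'n. z \<bullet> (A *v z)) \<in> borel_measurable borel"
  by (intro borel_measurable_continuous_onI continuous_intros)

lemma real_sqrt_prod: "finite A \<Longrightarrow> sqrt (prod f A) = (\<Prod>x\<in>A. sqrt (f x))"
  by (induction A rule: finite_induct) (auto simp: real_sqrt_mult)

lemma gaussian_integral_diagonal:
  fixes A :: "real^'p^'p"
  assumes diag: "\<And>i j. i \<noteq> j \<Longrightarrow> A$i$j = 0" and pos: "\<And>i. A$i$i > 0"
  shows "(\<integral>\<^sup>+z. ennreal (exp (- (z \<bullet> (A *v z) / 2))) \<partial>lborel)
    = ennreal (sqrt (2 * pi) ^ CARD('p) / sqrt (det A))"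
proof -
  have "z \<bullet> (A *v z) = (\<Sum>i\<in>UNIV. \<Sum>j\<in>UNIV. if j = i then z$i * A$i$i * z$i else 0)" for z
    unfolding quadratic_form_eq_double_sum by (intro sum.cong refl) (auto simp: diag)
  then have "ennreal (exp (- (z \<bullet> (A *v z) / 2))) = (\<Prod>i\<in>UNIV. ennreal (exp (- (A$i$i * (z$i)\<^sup>2 / 2))))" for z
    by (simp add: prod_ennreal exp_sum[symmetric] sum_divide_distrib sum_negf power2_eq_square mult_ac)
  then have "(\<integral>\<^sup>+z. ennreal (exp (- (z \<bullet> (A *v z) / 2))) \<partial>lborel)
      = (\<Prod>i\<in>UNIV. \<integral>\<^sup>+t. ennreal (exp (- (A$i$i * t\<^sup>2 / 2))) \<partial>lborel)"
    using nn_integral_lborel_prod_components[where f="\<lambda>i t. ennreal (exp (- (A$i$i * t\<^sup>2 / 2)))"]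
    by simp
  also have "\<dots> = ennreal (\<Prod>i\<in>UNIV. sqrt (2 * pi / A$i$i))"
    using pos by (simp add: nn_integral_exp_neg_square) (rule prod_ennreal, simp add: less_imp_le)
  also have "(\<Prod>i\<in>UNIV. sqrt (2 * pi / A$i$i)) = sqrt (2 * pi) ^ CARD('p) / sqrt (det A)"
    by (simp add: det_diagonal[OF diag] real_sqrt_prod real_sqrt_divide prod_dividef)
  finally show ?thesis .
qed

lemma nn_integral_lborel_eq_PiM:
  fixes F :: "real^'p::finite \<Rightarrow> ennreal"
  assumes [measurable]: "F \<in> borel_measurable borel"
  shows "(\<integral>\<^sup>+z. F z \<partial>lborel) = (\<integral>\<^sup>+h. F (\<Sum>b\<in>Basis. h b *\<^sub>R b) \<partial>(\<Pi>\<^sub>M b\<in>Basis. lborel))"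
  by (subst lborel_eq) (simp add: nn_integral_distr)

text \<open>Integrating along the sheared axis first, the shear becomes a translation.\<close>
lemma nn_integral_lborel_shear:
  fixes f :: "real^'p::finite \<Rightarrow> ennreal" and c :: "real^'p \<Rightarrow> real"
  assumes f[measurable]: "f \<in> borel_measurable borel" and c[measurable]: "c \<in> borel_measurable borel"
    and c_const: "\<And>z t. c (z + t *\<^sub>R axis k 1) = c z"
  shows "(\<integral>\<^sup>+z. f (z + c z *\<^sub>R axis k 1) \<partial>lborel) = (\<integral>\<^sup>+z. f z \<partial>lborel)"
proof -
  interpret P: product_sigma_finite "\<lambda>_::real^'p. lborel::real measure"
    by standard
  define e :: "real^'p" where "e = axis k 1"
  define I where "I = Basis - {e}"
  have BI: "Basis = insert e I" "finite I" "e \<notin> I"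
    by (auto simp: I_def e_def)
  define V where "V h = (\<Sum>b\<in>I. h b *\<^sub>R b)" for h :: "real^'p \<Rightarrow> real"
  have V: "(\<Sum>b\<in>Basis. (h(e := t)) b *\<^sub>R b) = V h + t *\<^sub>R e" for h t
  proof -
    have "(\<Sum>b\<in>I. (h(e := t)) b *\<^sub>R b) = V h"
      unfolding V_def using BI by (intro sum.cong) auto
    then show ?thesis
      unfolding BI(1) using BI(2,3) by (simp add: add.commute)
  qed
  have [measurable]: "(\<lambda>h. \<Sum>b\<in>Basis. h b *\<^sub>R b) \<in> borel_measurable (\<Pi>\<^sub>M b\<in>insert e I. (lborel::real measure))"
    unfolding BI(1)[symmetric] by measurable
  have cV: "c (V h + t *\<^sub>R e) = c (V h)" for h t
    using c_const by (simp add: e_def)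
  have shift: "(\<integral>\<^sup>+t. f (V h + (s + t) *\<^sub>R e) \<partial>lborel) = (\<integral>\<^sup>+t. f (V h + t *\<^sub>R e) \<partial>lborel)" for h s
    using nn_integral_real_affine[of "\<lambda>t. f (V h + t *\<^sub>R e)" 1 s] by simp
  have "(\<integral>\<^sup>+z. f (z + c z *\<^sub>R e) \<partial>lborel)
      = (\<integral>\<^sup>+h. f ((\<Sum>b\<in>Basis. h b *\<^sub>R b) + c (\<Sum>b\<in>Basis. h b *\<^sub>R b) *\<^sub>R e) \<partial>(\<Pi>\<^sub>M b\<in>insert e I. lborel))"
    unfolding BI(1)[symmetric] by (rule nn_integral_lborel_eq_PiM) (simp add: e_def)
  also have "\<dots> = (\<integral>\<^sup>+h. (\<integral>\<^sup>+t. f (V h + (c (V h) + t) *\<^sub>R e) \<partial>lborel) \<partial>(\<Pi>\<^sub>M b\<in>I. lborel))"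
    by (subst P.product_nn_integral_insert[OF BI(2,3)]) (simp_all only: V cV, simp_all add: algebra_simps)
  also have "\<dots> = (\<integral>\<^sup>+h. (\<integral>\<^sup>+t. f (V h + t *\<^sub>R e) \<partial>lborel) \<partial>(\<Pi>\<^sub>M b\<in>I. lborel))"
    by (simp add: shift)
  also have "\<dots> = (\<integral>\<^sup>+h. f (\<Sum>b\<in>Basis. h b *\<^sub>R b) \<partial>(\<Pi>\<^sub>M b\<in>insert e I. lborel))"
    by (subst P.product_nn_integral_insert[OF BI(2,3)]) (simp_all only: V, measurable)
  also have "\<dots> = (\<integral>\<^sup>+z. f z \<partial>lborel)"
    unfolding BI(1)[symmetric] by (rule nn_integral_lborel_eq_PiM[symmetric]) simp
  finally show ?thesis
    by (simp add: e_def)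
qed

section \<open>Positive definite quadratic forms\<close>

lemma spd_symmetric: "spd A \<Longrightarrow> A$i$j = A$j$i"
  unfolding spd_def by (metis transpose_def vec_lambda_beta)

lemma spd_quadratic_form_pos: "spd A \<Longrightarrow> z \<noteq> 0 \<Longrightarrow> z \<bullet> (A *v z) > 0"
  by (simp add: spd_def)

lemma spd_quadratic_form_nonneg: "spd A \<Longrightarrow> z \<bullet> (A *v z) \<ge> 0"
  by (cases "z = 0") (auto dest: spd_quadratic_form_pos[of A z])

lemma spd_diagonal_pos:
  fixes A :: "real^'p^'p"
  assumes "spd A"
  shows "A$i$i > 0"
proof -
  have "axis i 1 \<bullet> (A *v axis i 1) = (A *v axis i 1)$i"
    by (simp only: inner_axis') simp
  also have "\<dots> = A$i$i"
    by (simp add: matrix_vector_mult_def axis_def if_distrib[of "\<lambda>x. _ * x"] cong: if_cong)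
  finally have "axis i 1 \<bullet> (A *v axis i 1) = A$i$i" .
  then show ?thesis
    using spd_quadratic_form_pos[OF assms, of "axis i 1"] by simp
qed

lemma quadratic_form_congruence:
  fixes M B :: "real^'p^'p"
  shows "z \<bullet> ((transpose M ** B ** M) *v z) = (M *v z) \<bullet> (B *v (M *v z))"
proof -
  have "z \<bullet> ((transpose M ** B ** M) *v z) = z \<bullet> (transpose M *v (B *v (M *v z)))"
    by (simp only: matrix_vector_mul_assoc matrix_mul_assoc)
  also have "\<dots> = ((B *v (M *v z)) v* M) \<bullet> z"
    by (simp only: transpose_matrix_vector inner_commute)
  also have "\<dots> = (B *v (M *v z)) \<bullet> (M *v z)"
    by (rule dot_lmul_matrix)
  finally show ?thesis
    by (simp only: inner_commute)
qed

text \<open>One step of symmetric Gaussian elimination with pivot \<open>A$k$k\<close>.\<close>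
lemma symmetric_shear_factorization:
  fixes A :: "real^'p^'p" and k :: 'p and a :: real and c :: "real^'p"
  assumes sym: "transpose A = A" and a: "a = A$k$k" "a > 0"
    and c: "c = (\<chi> j. if j = k then 0 else A$k$j / a)"
    and A': "A' = (\<chi> i j. if i = k \<or> j = k then (if i = j then a else 0) else A$i$j - A$i$k * A$k$j / a)"
    and M: "M = (\<chi> i j. (if i = j then 1 else 0) + (if i = k then c$j else 0))"
  shows "A = transpose M ** A' ** M" "\<And>z. M *v z = z + (c \<bullet> z) *\<^sub>R axis k 1" "det M = 1"
proof -
  have A_sym: "A$i$j = A$j$i" for i j
    by (metis sym transpose_def vec_lambda_beta)
  have ck: "c$k = 0"
    by (simp add: c)
  have A'M: "(A' ** M)$i$j = A'$i$j + A'$i$k * c$j" for i j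
    by (simp add: M matrix_matrix_mult_def distrib_left sum.distrib if_distrib[of "\<lambda>x. _ * x"] sum.delta cong: if_cong)
  have "(transpose M ** A' ** M)$i$j = (A' ** M)$i$j + c$i * (A' ** M)$k$j" for i j
    by (simp add: M matrix_matrix_mult_def transpose_def distrib_right sum.distrib if_distrib[of "\<lambda>x. x * _"]
        sum.delta sum_distrib_left mult.assoc cong: if_cong)
  then have "(transpose M ** A' ** M)$i$j = A$i$j" for i j
    unfolding A'M using a ck A_sym[of i k] A_sym[of k j]
    by (cases "i = k"; cases "j = k") (auto simp: A' c field_simps)
  then show "A = transpose M ** A' ** M"
    by (simp add: vec_eq_iff)
  show "M *v z = z + (c \<bullet> z) *\<^sub>R axis k 1" for z
    by (simp add: vec_eq_iff M matrix_vector_mult_def distrib_right sum.distrib if_distrib[of "\<lambda>x. x * _"]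
        sum.delta inner_vec_def axis_def cong: if_cong)
  have "c = (\<Sum>j\<in>UNIV - {k}. c$j *s row j (mat 1 :: real^'p^'p))"
    by (simp add: vec_eq_iff row_def mat_def ck if_distrib[of "\<lambda>x. _ * x"] cong: if_cong)
  also have "\<dots> \<in> vec.span {row j (mat 1 :: real^'p^'p) |j. j \<noteq> k}"
    by (intro vec.span_sum vec.span_scale vec.span_base) auto
  finally have "det (\<chi> i. if i = k then row k (mat 1 :: real^'p^'p) + c else row i (mat 1)) = 1"
    using det_row_span[where A="mat 1 :: real^'p^'p" and x=c and i=k] by simp
  moreover have "M = (\<chi> i. if i = k then row k (mat 1) + c else row i (mat 1))"
    by (simp add: vec_eq_iff M row_def mat_def)
  ultimately show "det M = 1"
    by simp
qed

lemma spd_eliminate_pivot: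
  fixes A :: "real^'p^'p" and k :: 'p
  assumes spd: "spd A"
  obtains A' :: "real^'p^'p" and c :: "real^'p"
  where "spd A'" "det A' = det A" "c$k = 0"
    and "\<And>z. z \<bullet> (A *v z) = (z + (c \<bullet> z) *\<^sub>R axis k 1) \<bullet> (A' *v (z + (c \<bullet> z) *\<^sub>R axis k 1))"
    and "\<And>i j. i \<noteq> j \<Longrightarrow> i = k \<or> j = k \<Longrightarrow> A'$i$j = 0"
    and "\<And>i j. i \<noteq> k \<Longrightarrow> j \<noteq> k \<Longrightarrow> A'$i$j = A$i$j - A$i$k * A$k$j / A$k$k"
proof -
  define a where "a = A$k$k"
  define c where "c = (\<chi> j. if j = k then 0 else A$k$j / a)"
  define A' where "A' = (\<chi> i j. if i = k \<or> j = k then (if i = j then a else 0) else A$i$j - A$i$k * A$k$j / a)"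
  define M :: "real^'p^'p" where "M = (\<chi> i j. (if i = j then 1 else 0) + (if i = k then c$j else 0))"
  have "a > 0"
    using spd_diagonal_pos[OF spd] by (simp add: a_def)
  note shear = symmetric_shear_factorization[OF _ a_def this c_def A'_def M_def]
  have sym: "transpose A = A"
    using spd by (simp add: spd_def)
  have ck: "c$k = 0"
    by (simp add: c_def)
  have qf: "z \<bullet> (A *v z) = (M *v z) \<bullet> (A' *v (M *v z))" for z
    by (subst shear(1)[OF sym]) (rule quadratic_form_congruence)
  have M_surj: "M *v (w - (c \<bullet> w) *\<^sub>R axis k 1) = w" for w
    by (simp add: shear(2)[OF sym] inner_diff_right inner_axis ck)
  have "w \<bullet> (A' *v w) > 0" if "w \<noteq> 0" for w
  proof -
    define z where "z = w - (c \<bullet> w) *\<^sub>R axis k 1"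
    have "z \<noteq> 0"
      using M_surj[of w] that by (auto simp: z_def)
    moreover have "w \<bullet> (A' *v w) = z \<bullet> (A *v z)"
      using qf[of z] by (simp only: z_def M_surj)
    ultimately show ?thesis
      using spd_quadratic_form_pos[OF spd] by simp
  qed
  moreover have "transpose A' = A'"
    using spd_symmetric[OF spd] by (auto simp: vec_eq_iff transpose_def A'_def mult.commute)
  ultimately have "spd A'"
    by (simp add: spd_def)
  moreover have "det A' = det A"
    using shear(1,3)[OF sym] by (metis det_mul det_transpose mult_1 mult_1_right)
  moreover have "A'$i$j = 0" if "i \<noteq> j" "i = k \<or> j = k" for i j
    using that by (auto simp: A'_def)
  moreover have "A'$i$j = A$i$j - A$i$k * A$k$j / A$k$k" if "i \<noteq> k" "j \<noteq> k" for i j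
    using that by (simp add: A'_def a_def)
  ultimately show thesis
    using that ck by (simp add: qf shear(2)[OF sym])
qed

lemma gaussian_integral_spd_partially_diagonal:
  fixes A :: "real^'p^'p"
  assumes "finite S" "spd A" "\<And>i j. i \<noteq> j \<Longrightarrow> i \<notin> S \<or> j \<notin> S \<Longrightarrow> A$i$j = 0"
  shows "det A > 0 \<and> (\<integral>\<^sup>+z. ennreal (exp (- (z \<bullet> (A *v z) / 2))) \<partial>lborel)
    = ennreal (sqrt (2 * pi) ^ CARD('p) / sqrt (det A))"
  using assms
proof (induction S arbitrary: A rule: finite_induct)
  \<comment> \<open>eliminate the pivots in \<open>S\<close> one at a time; no step changes the determinant or the integral\<close>
  case empty
  then have diag: "\<And>i j. i \<noteq> j \<Longrightarrow> A$i$j = 0" and pos: "\<And>i. A$i$i > 0"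
    by (auto intro: spd_diagonal_pos)
  then show ?case
    using gaussian_integral_diagonal[OF diag pos] det_diagonal[OF diag] by (simp add: prod_pos)
next
  case (insert k S)
  obtain A' c where spd': "spd A'" and det': "det A' = det A" and "c$k = 0"
    and qf: "\<And>z. z \<bullet> (A *v z) = (z + (c \<bullet> z) *\<^sub>R axis k 1) \<bullet> (A' *v (z + (c \<bullet> z) *\<^sub>R axis k 1))"
    and pivot: "\<And>i j. i \<noteq> j \<Longrightarrow> i = k \<or> j = k \<Longrightarrow> A'$i$j = 0"
    and rest: "\<And>i j. i \<noteq> k \<Longrightarrow> j \<noteq> k \<Longrightarrow> A'$i$j = A$i$j - A$i$k * A$k$j / A$k$k"
    using spd_eliminate_pivot[OF insert.prems(1)] by blast
  have "A'$i$j = 0" if "i \<noteq> j" "i \<notin> S \<or> j \<notin> S" for i j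
    using that pivot[of i j] rest[of i j] insert.prems(2)[of i j] insert.prems(2)[of i k] insert.prems(2)[of k j]
    by (cases "i = k \<or> j = k") auto
  note IH = insert.IH[OF spd' this]
  have "(\<integral>\<^sup>+z. ennreal (exp (- (z \<bullet> (A *v z) / 2))) \<partial>lborel)
      = (\<integral>\<^sup>+z. ennreal (exp (- (z \<bullet> (A' *v z) / 2))) \<partial>lborel)"
    unfolding qf using \<open>c$k = 0\<close>
    by (intro nn_integral_lborel_shear[where f="\<lambda>w. ennreal (exp (- (w \<bullet> (A' *v w) / 2)))"])
      (auto simp: inner_add_right inner_axis)
  then show ?case
    using IH det' by simp
qed

lemma
  fixes A :: "real^'p^'p"
  assumes "spd A"
  shows spd_det_pos: "det A > 0"
    and gaussian_integral_spd: "(\<integral>\<^sup>+z. ennreal (exp (- (z \<bullet> (A *v z) / 2))) \<partial>lborel)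
      = ennreal (sqrt (2 * pi) ^ CARD('p) / sqrt (det A))"
  using gaussian_integral_spd_partially_diagonal[of UNIV A] assms by auto

lemma spd_quadratic_form_coercive:
  fixes A :: "real^'p^'p"
  assumes "spd A"
  obtains c where "c > 0" "\<And>z. c * (norm z)\<^sup>2 \<le> z \<bullet> (A *v z)"
proof -
  have "sphere (0::real^'p) 1 \<noteq> {}"
    using norm_axis_1[of "undefined::'p"] by (auto simp: sphere_def intro!: exI[of _ "axis undefined 1"])
  moreover have "continuous_on (sphere 0 1) (\<lambda>z::real^'p. z \<bullet> (A *v z))"
    by (intro continuous_intros)
  ultimately obtain v where v: "v \<in> sphere 0 1"
    and v_min: "\<And>y. y \<in> sphere 0 1 \<Longrightarrow> v \<bullet> (A *v v) \<le> y \<bullet> (A *v y)"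
    using continuous_attains_inf[of "sphere (0::real^'p) 1" "\<lambda>z. z \<bullet> (A *v z)"] compact_sphere by blast
  have "v \<noteq> 0"
    using v by auto
  then have "v \<bullet> (A *v v) > 0"
    using spd_quadratic_form_pos[OF assms] by simp
  moreover have "v \<bullet> (A *v v) * (norm z)\<^sup>2 \<le> z \<bullet> (A *v z)" for z
  proof (cases "z = 0")
    case False
    define y where "y = (1 / norm z) *\<^sub>R z"
    have "y \<in> sphere 0 1"
      using False by (simp add: y_def)
    then have "v \<bullet> (A *v v) \<le> y \<bullet> (A *v y)"
      by (rule v_min)
    also have "y \<bullet> (A *v y) = (z \<bullet> (A *v z)) / (norm z)\<^sup>2"
      by (simp add: y_def matrix_vector_mult_scaleR power2_eq_square)
    finally show ?thesis
      using False by (simp add: field_simps)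
  qed simp
  ultimately show thesis
    using that by blast
qed

section \<open>The Poisson-lognormal law\<close>

lemma gauss_prec_density_nonneg: "spd A \<Longrightarrow> gauss_prec_density A z \<ge> 0"
  using spd_det_pos[of A] by (simp add: gauss_prec_density_def)

lemma borel_measurable_gauss_prec_density[measurable]: "gauss_prec_density A \<in> borel_measurable borel"
  unfolding gauss_prec_density_def[abs_def] by measurable

lemma nn_integral_gauss_prec_density:
  fixes A :: "real^'p^'p"
  assumes "spd A"
  shows "(\<integral>\<^sup>+z. ennreal (gauss_prec_density A z) \<partial>lborel) = 1"
proof -
  define K where "K = (2 * pi) powr (- real CARD('p) / 2) * sqrt (det A)"
  have "K > 0" "det A > 0"
    using spd_det_pos[OF assms] by (simp_all add: K_def)
  have "sqrt (2 * pi) ^ CARD('p) = (2 * pi) powr (real CARD('p) / 2)"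
    by (simp add: powr_half_sqrt[symmetric] powr_realpow[symmetric] powr_powr)
  then have "K * (sqrt (2 * pi) ^ CARD('p) / sqrt (det A)) = 1"
    using \<open>det A > 0\<close> by (simp add: K_def powr_minus field_simps)
  then have "ennreal K * ennreal (sqrt (2 * pi) ^ CARD('p) / sqrt (det A)) = 1"
    using \<open>K > 0\<close> \<open>det A > 0\<close> by (simp flip: ennreal_mult)
  moreover have "(\<integral>\<^sup>+z. ennreal (gauss_prec_density A z) \<partial>lborel)
      = ennreal K * (\<integral>\<^sup>+z. ennreal (exp (- (z \<bullet> (A *v z) / 2))) \<partial>lborel)"
    using \<open>K > 0\<close> by (simp add: gauss_prec_density_def K_def ennreal_mult nn_integral_cmult)
  ultimately show ?thesis
    by (simp add: gaussian_integral_spd[OF assms])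
qed

lemma integrable_gauss_prec_density: "spd A \<Longrightarrow> integrable lborel (gauss_prec_density A)"
  by (rule integrableI_nonneg)
    (simp_all add: gauss_prec_density_nonneg nn_integral_gauss_prec_density)

lemma mult_le_square_div_add_square:
  fixes a c t :: real
  assumes "c > 0"
  shows "a * t \<le> a\<^sup>2 / c + c * t\<^sup>2 / 4"
proof -
  have "a\<^sup>2 / c + c * t\<^sup>2 / 4 - a * t = (2 * a - c * t)\<^sup>2 / (4 * c)"
    using assms by (simp add: field_simps power2_eq_square)
  moreover have "(2 * a - c * t)\<^sup>2 / (4 * c) \<ge> 0"
    using assms by simp
  ultimately show ?thesis
    by linarith
qed

lemma nn_integral_exp_neg_norm_square_finite:
  assumes "r > 0"
  shows "(\<integral>\<^sup>+z. ennreal (exp (- (r * (norm z)\<^sup>2 / 2))) \<partial>(lborel::(real^'p) measure)) < \<infinity>"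
proof -
  have "z \<bullet> (mat r *v z) = r * (norm z)\<^sup>2" for z :: "real^'p"
    by (simp add: mat_def matrix_vector_mult_def inner_vec_def power2_norm_eq_inner sum_distrib_left
        if_distrib[of "\<lambda>x. x * _"] cong: if_cong) (simp add: mult_ac)
  then show ?thesis
    using gaussian_integral_diagonal[of "mat r :: real^'p^'p"] assms by (simp add: mat_def)
qed

text \<open>With \<open>c |z|\<^sup>2 \<le> z \<bullet> A z\<close> and \<open>|z$j| \<le> |z|\<close>, the exponent \<open>a z$j - z \<bullet> A z / 2\<close> is at
  most \<open>a\<^sup>2 / c - c |z|\<^sup>2 / 4\<close>, which leaves a Gaussian tail.\<close>
lemma gauss_prec_density_exp_moment_finite:
  fixes A :: "real^'p^'p"
  assumes "spd A"
  shows "(\<integral>\<^sup>+z. ennreal (exp (a * z$j) * gauss_prec_density A z) \<partial>lborel) < \<infinity>"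
proof -
  obtain c where c: "c > 0" "\<And>z. c * (norm z)\<^sup>2 \<le> z \<bullet> (A *v z)"
    using spd_quadratic_form_coercive[OF assms] by blast
  define K where "K = (2 * pi) powr (- real CARD('p) / 2) * sqrt (det A)"
  have "K \<ge> 0"
    using spd_det_pos[OF assms] by (simp add: K_def)
  have density: "gauss_prec_density A z = K * exp (- (z \<bullet> (A *v z) / 2))" for z
    by (simp add: gauss_prec_density_def K_def)
  have bound: "exp (a * z$j) * gauss_prec_density A z \<le> K * exp (a\<^sup>2 / c) * exp (- (c / 2 * (norm z)\<^sup>2 / 2))" for z
  proof -
    have "(z$j)\<^sup>2 \<le> (norm z)\<^sup>2"
      using power_mono[OF component_le_norm_cart[of z j] abs_ge_zero, of 2] by simp
    then have "a * z$j - z \<bullet> (A *v z) / 2 \<le> a\<^sup>2 / c - c / 2 * (norm z)\<^sup>2 / 2"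
      using mult_le_square_div_add_square[OF c(1), of a "z$j"] c(2)[of z] mult_left_mono[OF _ less_imp_le[OF c(1)]]
      by fastforce
    then have "exp (a * z$j) * exp (- (z \<bullet> (A *v z) / 2)) \<le> exp (a\<^sup>2 / c) * exp (- (c / 2 * (norm z)\<^sup>2 / 2))"
      by (simp flip: exp_add)
    then show ?thesis
      using \<open>K \<ge> 0\<close> by (simp add: density mult.assoc mult.left_commute mult_left_mono)
  qed
  have "(\<integral>\<^sup>+z. ennreal (exp (a * z$j) * gauss_prec_density A z) \<partial>lborel)
      \<le> (\<integral>\<^sup>+z. ennreal (K * exp (a\<^sup>2 / c)) * ennreal (exp (- (c / 2 * (norm z)\<^sup>2 / 2))) \<partial>(lborel :: (real^'p) measure))"
    by (rule nn_integral_mono) (use \<open>K \<ge> 0\<close> bound in \<open>simp add: ennreal_mult[symmetric] ennreal_leI\<close>)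
  also have "\<dots> = ennreal (K * exp (a\<^sup>2 / c)) * (\<integral>\<^sup>+z. ennreal (exp (- (c / 2 * (norm z)\<^sup>2 / 2))) \<partial>(lborel :: (real^'p) measure))"
    by (rule nn_integral_cmult) measurable
  also have "\<dots> < \<infinity>"
    using nn_integral_exp_neg_norm_square_finite[of "c / 2", where 'p='p] c(1) by (simp add: ennreal_mult_less_top)
  finally show ?thesis .
qed

lemma poisson_factorial_moment:
  fixes r :: real
  assumes r: "r > 0"
  shows "(\<integral>\<^sup>+k. ennreal (real k * (real k - 1)) \<partial>measure_pmf (poisson_pmf r)) = ennreal (r\<^sup>2)"
proof -
  define f where "f k = r ^ k / fact k * exp (- r) * (real k * (real k - 1))" for k :: nat
  have f_nonneg: "f k \<ge> 0" for k
    using r by (cases k) (auto simp: f_def)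
  \<comment> \<open>after a shift by two, the series is \<open>r\<^sup>2 e\<^sup>-\<^sup>r\<close> times the exponential series\<close>
  have "f (k + 2) = r\<^sup>2 * exp (- r) * (r ^ k / fact k)" for k
  proof -
    define D where "D = (real k + 2) * (real k + 1)"
    have "D > 0"
      by (simp add: D_def)
    have D_fm: "real (k + 2) * (real (k + 2) - 1) = D"
      by (simp add: D_def algebra_simps)
    have D_fact: "(fact (k + 2) :: real) = D * fact k"
      by (simp add: D_def numeral_2_eq_2 algebra_simps)
    have "f (k + 2) = r ^ k * r\<^sup>2 / (D * fact k) * exp (- r) * D"
      unfolding f_def D_fm D_fact by (simp add: power_add power2_eq_square)
    then show ?thesis
      using \<open>D > 0\<close> by (simp add: field_simps power2_eq_square)
  qed
  moreover have "(\<lambda>k. r\<^sup>2 * exp (- r) * (r ^ k / fact k)) sums (r\<^sup>2 * exp (- r) * exp r)"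
    using exp_converges[of r] by (intro sums_mult) (simp add: divide_inverse_commute scaleR_conv_of_real)
  ultimately have "(\<lambda>k. f (k + 2)) sums (r\<^sup>2)"
    by (simp add: mult.assoc flip: exp_add)
  then have "f sums (r\<^sup>2)"
    by (subst (asm) sums_iff_shift) (simp add: f_def numeral_2_eq_2)
  have "ennreal (pmf (poisson_pmf r) k) * ennreal (real k * (real k - 1)) = ennreal (f k)" for k
    using r by (cases k) (simp_all add: f_def ennreal_mult[symmetric])
  then have "(\<integral>\<^sup>+k. ennreal (real k * (real k - 1)) \<partial>measure_pmf (poisson_pmf r)) = (\<Sum>k. ennreal (f k))"
    by (simp add: nn_integral_measure_pmf nn_integral_count_space_nat)
  also have "\<dots> = ennreal (r\<^sup>2)"
    using suminf_ennreal2[OF f_nonneg sums_summable[OF \<open>f sums (r\<^sup>2)\<close>]] sums_unique[OF \<open>f sums (r\<^sup>2)\<close>] by simp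
  finally show ?thesis .
qed

definition pln_rate :: "real^'m \<Rightarrow> real^'p \<Rightarrow> real^'p^'m \<Rightarrow> real^'p \<Rightarrow> 'p \<Rightarrow> real" where
  "pln_rate x off B z j = exp (off$j + (transpose B *v x)$j + z$j)"

definition pln_cond_pmf :: "real^'m \<Rightarrow> real^'p \<Rightarrow> real^'p^'m \<Rightarrow> real^'p \<Rightarrow> (nat^'p) pmf" where
  "pln_cond_pmf x off B z = map_pmf vec_lambda (Pi_pmf UNIV 0 (\<lambda>j. poisson_pmf (pln_rate x off B z j)))"

lemma pln_rate_pos: "pln_rate x off B z j > 0"
  by (simp add: pln_rate_def)

lemma pmf_pln_cond_pmf:
  "pmf (pln_cond_pmf x off B z) Y = (\<Prod>j\<in>UNIV. poisson_pmf_val (pln_rate x off B z j) (Y$j))"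
proof -
  have "inj (vec_lambda :: ('p \<Rightarrow> nat) \<Rightarrow> nat^'p)"
    by (auto simp: inj_def vec_eq_iff)
  then have "pmf (pln_cond_pmf x off B z) (vec_lambda (vec_nth Y))
      = pmf (Pi_pmf UNIV 0 (\<lambda>j. poisson_pmf (pln_rate x off B z j))) (vec_nth Y)"
    unfolding pln_cond_pmf_def by (rule pmf_map_inj')
  also have "\<dots> = (\<Prod>j\<in>UNIV. pmf (poisson_pmf (pln_rate x off B z j)) (Y$j))"
    by (rule pmf_Pi') auto
  also have "\<dots> = (\<Prod>j\<in>UNIV. poisson_pmf_val (pln_rate x off B z j) (Y$j))"
    by (intro prod.cong refl) (simp add: poisson_pmf_val_def pln_rate_pos)
  finally show ?thesis
    by simp
qed

lemma pln_cond_pmf_component: "map_pmf (\<lambda>Y. Y$j) (pln_cond_pmf x off B z) = poisson_pmf (pln_rate x off B z j)"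
  unfolding pln_cond_pmf_def map_pmf_comp by (simp add: Pi_pmf_component)

lemma borel_measurable_pmf_pln_cond_pmf[measurable]:
  "(\<lambda>z. pmf (pln_cond_pmf x off B z) Y) \<in> borel_measurable borel"
  unfolding pmf_pln_cond_pmf poisson_pmf_val_def pln_rate_def
  by (intro borel_measurable_continuous_onI continuous_intros) auto

lemma borel_measurable_pln_law: "f \<in> borel_measurable (pln_law x off \<theta>)"
  by (simp add: pln_law_def)

lemma pln_pmf_eq_nn_integral:
  assumes "spd \<Omega>"
  shows "ennreal (pln_pmf x off (B, \<Omega>) Y)
    = (\<integral>\<^sup>+z. ennreal (pmf (pln_cond_pmf x off B z) Y * gauss_prec_density \<Omega> z) \<partial>lborel)"
proof -
  have "pln_pmf x off (B, \<Omega>) Y = (\<integral>z. pmf (pln_cond_pmf x off B z) Y * gauss_prec_density \<Omega> z \<partial>lborel)"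
    by (simp add: pln_pmf_def pmf_pln_cond_pmf pln_rate_def)
  moreover have "integrable lborel (\<lambda>z. pmf (pln_cond_pmf x off B z) Y * gauss_prec_density \<Omega> z)"
    using integrable_gauss_prec_density[OF assms]
    by (rule Bochner_Integration.integrable_bound)
      (auto intro!: mult_left_le_one_le simp: pmf_le_1 gauss_prec_density_nonneg[OF assms])
  ultimately show ?thesis
    by (simp add: nn_integral_eq_integral gauss_prec_density_nonneg[OF assms])
qed

lemma nn_integral_pln_law:
  assumes "spd \<Omega>"
  shows "(\<integral>\<^sup>+Y. h Y \<partial>pln_law x off (B, \<Omega>))
    = (\<integral>\<^sup>+z. ennreal (gauss_prec_density \<Omega> z) * (\<integral>\<^sup>+Y. h Y \<partial>measure_pmf (pln_cond_pmf x off B z)) \<partial>lborel)"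
proof -
  have "(\<integral>\<^sup>+Y. h Y \<partial>pln_law x off (B, \<Omega>))
      = (\<integral>\<^sup>+Y. (\<integral>\<^sup>+z. ennreal (pmf (pln_cond_pmf x off B z) Y * gauss_prec_density \<Omega> z) * h Y \<partial>lborel) \<partial>count_space UNIV)"
    unfolding pln_law_def by (subst nn_integral_density) (auto simp: pln_pmf_eq_nn_integral[OF assms] nn_integral_multc)
  also have "\<dots> = (\<integral>\<^sup>+z. (\<integral>\<^sup>+Y. ennreal (gauss_prec_density \<Omega> z) * (ennreal (pmf (pln_cond_pmf x off B z) Y) * h Y) \<partial>count_space UNIV) \<partial>lborel)"
    by (subst nn_integral_count_space_nn_integral)
      (auto intro!: nn_integral_cong simp: ennreal_mult gauss_prec_density_nonneg[OF assms] mult_ac)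
  finally show ?thesis
    by (simp add: nn_integral_cmult nn_integral_measure_pmf)
qed

lemma prob_space_pln_law:
  assumes "spd \<Omega>"
  shows "prob_space (pln_law x off (B, \<Omega>))"
proof
  have "emeasure (pln_law x off (B, \<Omega>)) (space (pln_law x off (B, \<Omega>))) = (\<integral>\<^sup>+Y. 1 \<partial>pln_law x off (B, \<Omega>))"
    by simp
  also have "\<dots> = 1"
    by (simp only: nn_integral_pln_law[OF assms])
      (simp add: measure_pmf.emeasure_space_1 nn_integral_gauss_prec_density[OF assms])
  finally show "emeasure (pln_law x off (B, \<Omega>)) (space (pln_law x off (B, \<Omega>))) = 1" .
qed

lemma nn_integral_pln_cond_pmf_factorial_moment:
  "(\<integral>\<^sup>+Y. ennreal (real (Y$j) * (real (Y$j) - 1)) \<partial>measure_pmf (pln_cond_pmf x off B z))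
    = ennreal ((pln_rate x off B z j)\<^sup>2)"
proof -
  have "(\<integral>\<^sup>+Y. ennreal (real (Y$j) * (real (Y$j) - 1)) \<partial>measure_pmf (pln_cond_pmf x off B z))
      = (\<integral>\<^sup>+k. ennreal (real k * (real k - 1)) \<partial>measure_pmf (map_pmf (\<lambda>Y. Y$j) (pln_cond_pmf x off B z)))"
    by simp
  then show ?thesis
    unfolding pln_cond_pmf_component using poisson_factorial_moment[OF pln_rate_pos] by simp
qed

lemma pln_law_factorial_moment_finite:
  assumes "spd \<Omega>"
  shows "(\<integral>\<^sup>+Y. ennreal (real (Y$j) * (real (Y$j) - 1)) \<partial>pln_law x off (B, \<Omega>)) < \<infinity>"
proof -
  define c where "c = exp (2 * (off$j + (transpose B *v x)$j))"
  have "ennreal (gauss_prec_density \<Omega> z) * ennreal ((pln_rate x off B z j)\<^sup>2)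
      = ennreal c * ennreal (exp (2 * z$j) * gauss_prec_density \<Omega> z)" for z
    using gauss_prec_density_nonneg[OF assms]
    by (simp add: c_def pln_rate_def power2_eq_square mult_ac flip: ennreal_mult exp_add)
  then have "(\<integral>\<^sup>+Y. ennreal (real (Y$j) * (real (Y$j) - 1)) \<partial>pln_law x off (B, \<Omega>))
      = (\<integral>\<^sup>+z. ennreal c * ennreal (exp (2 * z$j) * gauss_prec_density \<Omega> z) \<partial>lborel)"
    unfolding nn_integral_pln_law[OF assms] nn_integral_pln_cond_pmf_factorial_moment by simp
  also have "\<dots> = ennreal c * (\<integral>\<^sup>+z. ennreal (exp (2 * z$j) * gauss_prec_density \<Omega> z) \<partial>lborel)"
    by (rule nn_integral_cmult) simp
  also have "\<dots> < \<infinity>"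
    using gauss_prec_density_exp_moment_finite[OF assms] by (simp add: ennreal_mult_less_top)
  finally show ?thesis .
qed

lemma ennreal_square_le_factorial_moment:
  "ennreal ((real k)\<^sup>2) \<le> 1 + 2 * ennreal (real k * (real k - 1))"
proof -
  have "0 \<le> real k * (real k - 1)"
    by (cases k) auto
  have "ennreal ((real k)\<^sup>2) \<le> ennreal (1 + 2 * (real k * (real k - 1)))"
    using zero_le_power2[of "real k - 1"] by (intro ennreal_leI) (simp add: power2_eq_square algebra_simps)
  also have "\<dots> = 1 + 2 * ennreal (real k * (real k - 1))"
    using \<open>0 \<le> real k * (real k - 1)\<close> by (simp add: ennreal_plus ennreal_mult del: ennreal_plus_if)
  finally show ?thesis .
qed
lemma integrable_pln_law_component_square:
  assumes "spd \<Omega>"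
  shows "integrable (pln_law x off (B, \<Omega>)) (\<lambda>Y. (real (Y$j))\<^sup>2)"
proof (rule integrableI_bounded)
  interpret prob_space "pln_law x off (B, \<Omega>)"
    by (rule prob_space_pln_law[OF assms])
  have "(\<integral>\<^sup>+Y. ennreal (norm ((real (Y$j))\<^sup>2)) \<partial>pln_law x off (B, \<Omega>))
      \<le> (\<integral>\<^sup>+Y. 1 + 2 * ennreal (real (Y$j) * (real (Y$j) - 1)) \<partial>pln_law x off (B, \<Omega>))"
    by (intro nn_integral_mono) (simp add: ennreal_square_le_factorial_moment)
  also have "\<dots> = 1 + 2 * (\<integral>\<^sup>+Y. ennreal (real (Y$j) * (real (Y$j) - 1)) \<partial>pln_law x off (B, \<Omega>))"
    by (simp add: nn_integral_add nn_integral_cmult emeasure_space_1 borel_measurable_pln_law)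
  also have "\<dots> < \<infinity>"
    using pln_law_factorial_moment_finite[OF assms, where j=j and x=x and off=off and B=B]
    by (simp add: ennreal_mult_less_top)
  finally show "(\<integral>\<^sup>+Y. ennreal (norm ((real (Y$j))\<^sup>2)) \<partial>pln_law x off (B, \<Omega>)) < \<infinity>" .
qed (rule borel_measurable_pln_law)

lemma integrable_pln_law_quadratic_growth:
  fixes f :: "nat^'p \<Rightarrow> real"
  assumes "spd \<Omega>" and f_le: "\<And>Y. \<bar>f Y\<bar> \<le> C * (1 + (\<Sum>j\<in>UNIV. (real (Y$j))\<^sup>2))"
  shows "integrable (pln_law x off (B, \<Omega>)) f"
proof (rule Bochner_Integration.integrable_bound)
  interpret prob_space "pln_law x off (B, \<Omega>)"
    by (rule prob_space_pln_law[OF assms(1)])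
  show "integrable (pln_law x off (B, \<Omega>)) (\<lambda>Y. C * (1 + (\<Sum>j\<in>UNIV. (real (Y$j))\<^sup>2)))"
    using integrable_pln_law_component_square[OF assms(1)]
    by (intro integrable_mult_right Bochner_Integration.integrable_add Bochner_Integration.integrable_sum integrable_const) auto
  show "AE Y in pln_law x off (B, \<Omega>). norm (f Y) \<le> norm (C * (1 + (\<Sum>j\<in>UNIV. (real (Y$j))\<^sup>2)))"
    using f_le by (intro AE_I2) (smt (verit) real_norm_def)
qed (rule borel_measurable_pln_law)

section \<open>Bounds on the ELBO\<close>

lemma continuous_on_det:
  fixes f :: "'a::topological_space \<Rightarrow> real^'p^'p"
  shows "continuous_on S f \<Longrightarrow> continuous_on S (\<lambda>t. det (f t))"
  unfolding det_def by (intro continuous_intros)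

lemma continuous_on_ln_det_spd:
  fixes \<Theta> :: "('a::topological_space \<times> (real^'p^'p)) set"
  assumes "\<forall>(B, \<Omega>)\<in>\<Theta>. spd \<Omega>"
  shows "continuous_on \<Theta> (\<lambda>\<theta>. ln (det (snd \<theta>)))"
proof -
  have "\<forall>\<theta>\<in>\<Theta>. det (snd \<theta>) \<noteq> 0"
    using assms spd_det_pos by fastforce
  then show ?thesis
    by (intro continuous_on_ln continuous_on_det continuous_intros)
qed

lemma continuous_on_pln_elbo:
  fixes x :: "real^'m" and off :: "real^'p" and \<Theta> :: "((real^'p^'m) \<times> (real^'p^'p)) set"
  assumes "\<forall>(B, \<Omega>)\<in>\<Theta>. spd \<Omega>"
  shows "continuous_on \<Theta> (\<lambda>\<theta>. pln_elbo x off Y \<theta> \<psi>)"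
proof -
  have "pln_elbo x off Y \<theta> \<psi> =
       (\<Sum>j\<in>UNIV. real (Y$j) * (off$j + fst \<psi>$j + (\<Sum>i\<in>UNIV. fst \<theta>$i$j * x$i)))
     - (\<Sum>j\<in>UNIV. exp (off$j + (\<Sum>i\<in>UNIV. fst \<theta>$i$j * x$i) + fst \<psi>$j + (snd \<psi>$j)\<^sup>2 / 2))
     - (\<Sum>j\<in>UNIV. ln (fact (Y$j)))
     + ln (det (snd \<theta>)) / 2
     - (\<Sum>i\<in>UNIV. \<Sum>j\<in>UNIV. fst \<psi>$i * snd \<theta>$i$j * fst \<psi>$j) / 2
     - (\<Sum>j\<in>UNIV. snd \<theta>$j$j * (snd \<psi>$j)\<^sup>2) / 2
     + (\<Sum>j\<in>UNIV. ln (snd \<psi>$j))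
     + real CARD('p) / 2" for \<theta>
    by (cases \<theta>; cases \<psi>)
      (simp add: pln_elbo_def inner_vec_def matrix_vector_mult_def transpose_def sum_distrib_left mult_ac)
  then show ?thesis
    using continuous_on_ln_det_spd[OF assms]
    by (simp only:) (intro continuous_on_add continuous_on_diff continuous_on_divide continuous_on_const
        continuous_on_sum continuous_on_mult continuous_on_exp continuous_on_power continuous_on_component
        continuous_on_fst continuous_on_snd continuous_on_id; simp)
qed

lemma abs_inner_counts_le:
  fixes Y :: "nat^'p"
  shows "\<bar>(\<chi> j. real (Y$j)) \<bullet> v\<bar> \<le> (\<Sum>j\<in>UNIV. real (Y$j)) * norm v"
proof -
  have "norm (\<chi> j. real (Y$j)) \<le> (\<Sum>j\<in>UNIV. real (Y$j))"
    using norm_le_l1_cart[of "\<chi> j. real (Y$j)"] by simp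
  then show ?thesis
    using Cauchy_Schwarz_ineq2[of "\<chi> j. real (Y$j)" v] by (meson mult_right_mono norm_ge_zero order_trans)
qed

lemma pln_elbo_eq_counts_part:
  "pln_elbo x off Y (B, \<Omega>) (m, s) = (\<chi> j. real (Y$j)) \<bullet> (off + m + transpose B *v x)
    - (\<Sum>j\<in>UNIV. ln (fact (Y$j))) + pln_elbo x off 0 (B, \<Omega>) (m, s)"
  by (simp add: pln_elbo_def flip: zero_vec_def)

lemma pln_elbo_le:
  fixes x :: "real^'m" and off :: "real^'p"
  assumes "spd \<Omega>" "\<forall>j. s$j > 0"
  shows "pln_elbo x off Y (B, \<Omega>) (m, s) \<le> (\<Sum>j\<in>UNIV. real (Y$j)) * norm (off + m + transpose B *v x)
    + ln (det \<Omega>) / 2 + (\<Sum>j\<in>UNIV. ln (s$j)) + real CARD('p) / 2"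
proof -
  have "(\<Sum>j\<in>UNIV. exp (off $ j + (transpose B *v x) $ j + m $ j + (s $ j)^2 / 2)) \<ge> 0"
    by (intro sum_nonneg) simp
  moreover have "(\<Sum>j\<in>UNIV. ln (fact (Y $ j) :: real)) \<ge> 0"
    by (intro sum_nonneg ln_ge_zero) simp
  moreover have "(\<Sum>j\<in>UNIV. \<Omega> $ j $ j * (s $ j)^2) \<ge> 0"
    using spd_diagonal_pos[OF assms(1)] by (intro sum_nonneg mult_nonneg_nonneg) (auto intro: less_imp_le)
  ultimately show ?thesis
    using abs_inner_counts_le[of Y "off + m + transpose B *v x"] spd_quadratic_form_nonneg[OF assms(1), of m]
    unfolding pln_elbo_def prod.case by linarith
qed

lemma bounded_linear_transpose_mult: "bounded_linear (\<lambda>B::real^'p^'m. transpose B *v x)"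
  unfolding linear_conv_bounded_linear[symmetric]
  by (rule linearI) (simp_all add: vec_eq_iff matrix_vector_mult_def transpose_def sum.distrib algebra_simps sum_distrib_left)

lemma pln_elbo_le_affine:
  fixes x :: "real^'m" and off :: "real^'p"
    and \<Theta> :: "((real^'p^'m) \<times> (real^'p^'p)) set" and \<Psi> :: "((real^'p) \<times> (real^'p)) set"
  assumes \<Theta>_spd: "\<forall>(B, \<Omega>)\<in>\<Theta>. spd \<Omega>" and "compact \<Theta>"
    and \<Psi>_pos: "\<forall>(m, s)\<in>\<Psi>. \<forall>j. s $ j > 0" and "bounded \<Psi>"
  obtains a b where "a \<ge> 0"
    "\<And>Y \<theta> \<psi>. \<theta> \<in> \<Theta> \<Longrightarrow> \<psi> \<in> \<Psi> \<Longrightarrow> pln_elbo x off Y \<theta> \<psi> \<le> a * (\<Sum>j\<in>UNIV. real (Y$j)) + b"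
proof -
  obtain R where "R > 0" and R: "\<And>\<theta>. \<theta> \<in> \<Theta> \<Longrightarrow> norm \<theta> \<le> R"
    using compact_imp_bounded[OF \<open>compact \<Theta>\<close>] by (auto simp: bounded_pos)
  obtain R' where "R' > 0" and R': "\<And>\<psi>. \<psi> \<in> \<Psi> \<Longrightarrow> norm \<psi> \<le> R'"
    using \<open>bounded \<Psi>\<close> by (auto simp: bounded_pos)
  obtain K where "K > 0" and K: "\<And>B :: real^'p^'m. norm (transpose B *v x) \<le> norm B * K"
    using bounded_linear.pos_bounded[OF bounded_linear_transpose_mult] by blast
  have "bounded ((\<lambda>\<theta>. ln (det (snd \<theta>))) ` \<Theta>)"
    by (intro compact_imp_bounded compact_continuous_image continuous_on_ln_det_spd \<Theta>_spd \<open>compact \<Theta>\<close>)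
  then obtain LD where LD: "\<And>\<theta>. \<theta> \<in> \<Theta> \<Longrightarrow> ln (det (snd \<theta>)) \<le> LD"
    by (auto simp: bounded_real abs_le_iff)
  define a where "a = norm off + R' + R * K"
  define b where "b = LD / 2 + real CARD('p) * R' + real CARD('p) / 2"
  show thesis
  proof (rule that)
    show "a \<ge> 0"
      using \<open>R > 0\<close> \<open>R' > 0\<close> \<open>K > 0\<close> by (simp add: a_def)
  next
    fix Y \<theta> \<psi>
    assume "\<theta> \<in> \<Theta>" "\<psi> \<in> \<Psi>"
    obtain B \<Omega> m s where \<theta>: "\<theta> = (B, \<Omega>)" and \<psi>: "\<psi> = (m, s)"
      by (cases \<theta>, cases \<psi>)
    have "spd \<Omega>" "\<forall>j. s$j > 0"
      using \<Theta>_spd \<Psi>_pos \<open>\<theta> \<in> \<Theta>\<close> \<open>\<psi> \<in> \<Psi>\<close> by (auto simp: \<theta> \<psi>)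
    have "norm B \<le> R" "norm m \<le> R'" "norm s \<le> R'"
      using R[OF \<open>\<theta> \<in> \<Theta>\<close>] R'[OF \<open>\<psi> \<in> \<Psi>\<close>] norm_fst_le[of B \<Omega>] norm_fst_le[of m s] norm_snd_le[where x=m and y=s]
      by (auto simp: \<theta> \<psi>)
    moreover have "norm (transpose B *v x) \<le> R * K"
      by (rule order_trans[OF K[of B] mult_right_mono]) (use \<open>norm B \<le> R\<close> \<open>K > 0\<close> in auto)
    ultimately have v_le: "norm (off + m + transpose B *v x) \<le> a"
      using norm_triangle_ineq[of "off + m" "transpose B *v x"] norm_triangle_ineq[of off m]
      unfolding a_def by linarith
    have "(\<Sum>j\<in>UNIV. ln (s$j)) \<le> real CARD('p) * R'"
    proof -
      have "ln (s$j) \<le> R'" for j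
        using ln_le_minus_one[of "s$j"] component_le_norm_cart[of s j] \<open>\<forall>j. s$j > 0\<close> \<open>norm s \<le> R'\<close>
        by force
      then show ?thesis
        using sum_bounded_above[of UNIV "\<lambda>j. ln (s$j)" R'] by simp
    qed
    moreover have "pln_elbo x off Y \<theta> \<psi> \<le> (\<Sum>j\<in>UNIV. real (Y$j)) * norm (off + m + transpose B *v x)
        + ln (det \<Omega>) / 2 + (\<Sum>j\<in>UNIV. ln (s$j)) + real CARD('p) / 2"
      unfolding \<theta> \<psi> by (rule pln_elbo_le) fact+
    moreover have "(\<Sum>j\<in>UNIV. real (Y$j)) * norm (off + m + transpose B *v x) \<le> a * (\<Sum>j\<in>UNIV. real (Y$j))"
      using v_le sum_nonneg[of UNIV "\<lambda>j. real (Y$j)"] by (metis mult.commute mult_left_mono of_nat_0_le_iff)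
    ultimately show "pln_elbo x off Y \<theta> \<psi> \<le> a * (\<Sum>j\<in>UNIV. real (Y$j)) + b"
      using LD[OF \<open>\<theta> \<in> \<Theta>\<close>] unfolding b_def \<theta> snd_conv by linarith
  qed
qed

lemma cSUP_cSUP_bounds:
  fixes f :: "'a \<Rightarrow> 'b \<Rightarrow> 'c::conditionally_complete_lattice"
  assumes "a \<in> A" "b \<in> B" and le: "\<And>a b. a \<in> A \<Longrightarrow> b \<in> B \<Longrightarrow> f a b \<le> u"
  shows "f a b \<le> (SUP a\<in>A. SUP b\<in>B. f a b)" and "(SUP a\<in>A. SUP b\<in>B. f a b) \<le> u"
proof -
  have inner_le: "(SUP b\<in>B. f a' b) \<le> u" if "a' \<in> A" for a'
    using assms(2) le that by (intro cSUP_least) auto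
  have "f a b \<le> (SUP b\<in>B. f a b)"
    using assms le by (intro cSUP_upper bdd_aboveI2) auto
  also have "\<dots> \<le> (SUP a\<in>A. SUP b\<in>B. f a b)"
    by (rule cSUP_upper[OF assms(1)], rule bdd_aboveI2, erule inner_le)
  finally show "f a b \<le> (SUP a\<in>A. SUP b\<in>B. f a b)" .
  show "(SUP a\<in>A. SUP b\<in>B. f a b) \<le> u"
    by (rule cSUP_least) (use assms(1) inner_le in auto)
qed

lemma ln_fact_le_square: "ln (fact k) \<le> (real k)\<^sup>2"
proof (cases "k = 0")
  case False
  then have "ln (fact k) \<le> ln (real k ^ k)"
    using fact_le_power[of k, where 'a=real] by (subst ln_le_cancel_iff) auto
  also have "\<dots> = real k * ln (real k)"
    using False by (simp add: ln_realpow)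
  also have "\<dots> \<le> real k * real k"
    using False ln_le_minus_one[of "real k"] by (intro mult_left_mono) auto
  finally show ?thesis
    by (simp add: power2_eq_square)
qed simp

lemma abs_le_of_affine_bounds:
  fixes F S S2 L a a' b b' :: real
  assumes "- (S * a') - L - b' \<le> F" "F \<le> a * S + b"
    and "0 \<le> S" "S \<le> S2" "L \<le> S2" "0 \<le> a" "0 \<le> a'" "0 \<le> b'"
  shows "\<bar>F\<bar> \<le> (a + a' + \<bar>b\<bar> + b' + 1) * (1 + S2)"
proof -
  have "a * S \<le> a * S2" "S * a' \<le> S2 * a'" "0 \<le> a * S2" "0 \<le> S2 * a'" "0 \<le> \<bar>b\<bar> * S2" "0 \<le> b' * S2"
    using assms by (simp_all add: mult_left_mono mult_right_mono)
  moreover have "(a + a' + \<bar>b\<bar> + b' + 1) * (1 + S2)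
      = a + a * S2 + a' + S2 * a' + \<bar>b\<bar> + \<bar>b\<bar> * S2 + b' + b' * S2 + 1 + S2"
    by (simp add: algebra_simps)
  ultimately show ?thesis
    unfolding abs_le_iff using assms abs_ge_self[of b] abs_ge_minus_self[of b] by (intro conjI) linarith+
qed

lemma integrable_pln_elbo_envelope:
  fixes x :: "real^'m" and off :: "real^'p"
    and \<Theta> T :: "((real^'p^'m) \<times> (real^'p^'p)) set" and \<Psi> :: "((real^'p) \<times> (real^'p)) set"
  assumes \<Theta>_spd: "\<forall>(B, \<Omega>)\<in>\<Theta>. spd \<Omega>" and "compact \<Theta>" and "\<theta>\<^sub>0 \<in> \<Theta>"
    and \<Psi>_pos: "\<forall>(m, s)\<in>\<Psi>. \<forall>j. s $ j > 0" and "bounded \<Psi>"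
    and "T \<subseteq> \<Theta>" "(B', \<Omega>') \<in> T" "(m', s') \<in> \<Psi>"
  shows "integrable (pln_law x off \<theta>\<^sub>0) (\<lambda>Y. SUP \<psi>\<in>\<Psi>. SUP \<theta>\<in>T. pln_elbo x off Y \<theta> \<psi>)"
proof -
  obtain a b where "a \<ge> 0" and upper:
    "\<And>Y \<theta> \<psi>. \<theta> \<in> \<Theta> \<Longrightarrow> \<psi> \<in> \<Psi> \<Longrightarrow> pln_elbo x off Y \<theta> \<psi> \<le> a * (\<Sum>j\<in>UNIV. real (Y$j)) + b"
    using pln_elbo_le_affine[OF \<Theta>_spd \<open>compact \<Theta>\<close> \<Psi>_pos \<open>bounded \<Psi>\<close>] by blast
  define a' where "a' = norm (off + m' + transpose B' *v x)"
  define b' where "b' = \<bar>pln_elbo x off 0 (B', \<Omega>') (m', s')\<bar>"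
  have envelope_bound: "\<bar>SUP \<psi>\<in>\<Psi>. SUP \<theta>\<in>T. pln_elbo x off Y \<theta> \<psi>\<bar>
      \<le> (a + a' + \<bar>b\<bar> + b' + 1) * (1 + (\<Sum>j\<in>UNIV. (real (Y$j))\<^sup>2))" for Y
  proof (rule abs_le_of_affine_bounds)
    define S where "S = (\<Sum>j\<in>UNIV. real (Y$j))"
    define L where "L = (\<Sum>j\<in>UNIV. ln (fact (Y$j) :: real))"
    have "- (S * a') - L - b' \<le> pln_elbo x off Y (B', \<Omega>') (m', s')"
      using pln_elbo_eq_counts_part[of x off Y B' \<Omega>' m' s'] abs_le_D2[OF abs_inner_counts_le[of Y "off + m' + transpose B' *v x"]]
        abs_ge_minus_self[of "pln_elbo x off 0 (B', \<Omega>') (m', s')"]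
      unfolding a'_def b'_def S_def L_def by linarith
    also have "\<dots> \<le> (SUP \<psi>\<in>\<Psi>. SUP \<theta>\<in>T. pln_elbo x off Y \<theta> \<psi>)"
      using cSUP_cSUP_bounds(1)[of "(m', s')" \<Psi> "(B', \<Omega>')" T "\<lambda>\<psi> \<theta>. pln_elbo x off Y \<theta> \<psi>" "a * S + b"]
        assms(6-8) upper unfolding S_def by blast
    finally show "- (S * a') - L - b' \<le> (SUP \<psi>\<in>\<Psi>. SUP \<theta>\<in>T. pln_elbo x off Y \<theta> \<psi>)" .
    show "(SUP \<psi>\<in>\<Psi>. SUP \<theta>\<in>T. pln_elbo x off Y \<theta> \<psi>) \<le> a * S + b"
      using cSUP_cSUP_bounds(2)[of "(m', s')" \<Psi> "(B', \<Omega>')" T "\<lambda>\<psi> \<theta>. pln_elbo x off Y \<theta> \<psi>" "a * S + b"]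
        assms(6-8) upper unfolding S_def by blast
    have "real k \<le> (real k)\<^sup>2" for k :: nat
      by (cases k) (auto simp: power2_eq_square)
    then show "0 \<le> S" "S \<le> (\<Sum>j\<in>UNIV. (real (Y$j))\<^sup>2)" "L \<le> (\<Sum>j\<in>UNIV. (real (Y$j))\<^sup>2)"
      unfolding S_def L_def using ln_fact_le_square by (auto intro!: sum_nonneg sum_mono)
  qed (simp_all add: \<open>a \<ge> 0\<close> a'_def b'_def)
  obtain B\<^sub>0 \<Omega>\<^sub>0 where \<theta>\<^sub>0: "\<theta>\<^sub>0 = (B\<^sub>0, \<Omega>\<^sub>0)" and "spd \<Omega>\<^sub>0"
    using \<Theta>_spd \<open>\<theta>\<^sub>0 \<in> \<Theta>\<close> by (cases \<theta>\<^sub>0) auto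
  show ?thesis
    unfolding \<theta>\<^sub>0 by (rule integrable_pln_law_quadratic_growth[OF \<open>spd \<Omega>\<^sub>0\<close> envelope_bound])
qed

lemma prob_space_pln_sample: "spd \<Omega> \<Longrightarrow> prob_space (pln_sample x off (B, \<Omega>) n)"
  unfolding pln_sample_def by (intro prob_space_PiM prob_space_pln_law)

lemma is_ve_in_compact_whp:
  assumes "\<forall>(B, \<Omega>)\<in>\<Theta>. spd \<Omega>" and "compact \<Theta>" and "\<theta>\<^sub>0 \<in> \<Theta>"
    and ve: "\<forall>n. \<forall>ys\<in>space (pln_sample x off \<theta>\<^sub>0 n). is_ve x off \<Theta> \<Psi> n ys (est n ys)"
  shows "\<exists>K. compact K \<and> (\<exists>A. (\<forall>n. A n \<in> sets (pln_sample x off \<theta>\<^sub>0 n)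
      \<and> A n \<subseteq> {ys \<in> space (pln_sample x off \<theta>\<^sub>0 n). est n ys \<in> K})
      \<and> (\<lambda>n. measure (pln_sample x off \<theta>\<^sub>0 n) (A n)) \<longlonglongrightarrow> 1)"
proof (intro exI conjI allI)
  show "compact \<Theta>"
    by fact
  show "space (pln_sample x off \<theta>\<^sub>0 n) \<in> sets (pln_sample x off \<theta>\<^sub>0 n)" for n
    by simp
  show "space (pln_sample x off \<theta>\<^sub>0 n) \<subseteq> {ys \<in> space (pln_sample x off \<theta>\<^sub>0 n). est n ys \<in> \<Theta>}" for n
    using ve by (auto simp: is_ve_def)
  have "prob_space (pln_sample x off \<theta>\<^sub>0 n)" for n
    using assms(1,3) by (cases \<theta>\<^sub>0) (auto intro!: prob_space_pln_sample)
  then show "(\<lambda>n. measure (pln_sample x off \<theta>\<^sub>0 n) (space (pln_sample x off \<theta>\<^sub>0 n))) \<longlonglongrightarrow> 1"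
    by (simp add: prob_space.prob_space)
qed

theorem proposition4:
  fixes x :: "real^'m" and off :: "real^'p"
    and \<Theta> :: "((real^'p^'m) \<times> (real^'p^'p)) set"
    and \<Psi> :: "((real^'p) \<times> (real^'p)) set"
    and \<theta>\<^sub>0 :: "(real^'p^'m) \<times> (real^'p^'p)"
  assumes \<Theta>_spd: "\<forall>(B, \<Omega>)\<in>\<Theta>. spd \<Omega>"
    and A1: "compact \<Theta>"
    and true_param: "\<theta>\<^sub>0 \<in> \<Theta>"
    and \<Psi>_pos: "\<forall>(m, s)\<in>\<Psi>. \<forall>j. s $ j > 0"
    and \<Psi>_ne: "\<Psi> \<noteq> {}"
    and A2: "bounded \<Psi>"
  shows
    "(AE Y in pln_law x off \<theta>\<^sub>0. \<forall>\<psi>\<in>\<Psi>. continuous_on \<Theta> (\<lambda>\<theta>. pln_elbo x off Y \<theta> \<psi>))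
     \<and> (\<forall>est :: nat \<Rightarrow> (nat \<Rightarrow> nat^'p) \<Rightarrow> ((real^'p^'m) \<times> (real^'p^'p)).
          (\<forall>n. \<forall>ys\<in>space (pln_sample x off \<theta>\<^sub>0 n). is_ve x off \<Theta> \<Psi> n ys (est n ys)) \<longrightarrow>
          (\<exists>K. compact K \<and>
             (\<exists>A. (\<forall>n. A n \<in> sets (pln_sample x off \<theta>\<^sub>0 n)
                       \<and> A n \<subseteq> {ys \<in> space (pln_sample x off \<theta>\<^sub>0 n). est n ys \<in> K})
                  \<and> (\<lambda>n. measure (pln_sample x off \<theta>\<^sub>0 n) (A n)) \<longlonglongrightarrow> 1)))
     \<and> (\<forall>\<delta>>0. \<forall>\<theta>'\<in>\<Theta>.
          (\<forall>Y. bdd_above {pln_elbo x off Y \<theta> \<psi> | \<theta> \<psi>. \<psi> \<in> \<Psi> \<and> \<theta> \<in> ball \<theta>' \<delta> \<inter> \<Theta>})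
          \<and> integrable (pln_law x off \<theta>\<^sub>0)
              (\<lambda>Y. SUP \<psi>\<in>\<Psi>. SUP \<theta>\<in>ball \<theta>' \<delta> \<inter> \<Theta>. pln_elbo x off Y \<theta> \<psi>))"
proof -
  obtain a b where upper:
    "\<And>Y \<theta> \<psi>. \<theta> \<in> \<Theta> \<Longrightarrow> \<psi> \<in> \<Psi> \<Longrightarrow> pln_elbo x off Y \<theta> \<psi> \<le> a * (\<Sum>j\<in>UNIV. real (Y$j)) + b"
    by (rule pln_elbo_le_affine[OF \<Theta>_spd A1 \<Psi>_pos A2]) (rule that)
  obtain m' s' where "(m', s') \<in> \<Psi>"
    using \<Psi>_ne by auto
  show ?thesis
  proof (intro conjI allI impI ballI)
    show "AE Y in pln_law x off \<theta>\<^sub>0. \<forall>\<psi>\<in>\<Psi>. continuous_on \<Theta> (\<lambda>\<theta>. pln_elbo x off Y \<theta> \<psi>)"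
      by (intro AE_I2 ballI continuous_on_pln_elbo[OF \<Theta>_spd])
  next
    fix est
    assume "\<forall>n. \<forall>ys\<in>space (pln_sample x off \<theta>\<^sub>0 n). is_ve x off \<Theta> \<Psi> n ys (est n ys)"
    then show "\<exists>K. compact K \<and> (\<exists>A. (\<forall>n. A n \<in> sets (pln_sample x off \<theta>\<^sub>0 n)
        \<and> A n \<subseteq> {ys \<in> space (pln_sample x off \<theta>\<^sub>0 n). est n ys \<in> K})
        \<and> (\<lambda>n. measure (pln_sample x off \<theta>\<^sub>0 n) (A n)) \<longlonglongrightarrow> 1)"
      by (rule is_ve_in_compact_whp[OF \<Theta>_spd A1 true_param])
  next
    fix \<delta> :: real and \<theta>' Y
    show "bdd_above {pln_elbo x off Y \<theta> \<psi> | \<theta> \<psi>. \<psi> \<in> \<Psi> \<and> \<theta> \<in> ball \<theta>' \<delta> \<inter> \<Theta>}"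
      by (rule bdd_aboveI[of _ "a * (\<Sum>j\<in>UNIV. real (Y$j)) + b"]) (auto intro: upper)
  next
    fix \<delta> :: real and \<theta>' :: "(real^'p^'m) \<times> (real^'p^'p)"
    assume "\<delta> > 0" "\<theta>' \<in> \<Theta>"
    then show "integrable (pln_law x off \<theta>\<^sub>0) (\<lambda>Y. SUP \<psi>\<in>\<Psi>. SUP \<theta>\<in>ball \<theta>' \<delta> \<inter> \<Theta>. pln_elbo x off Y \<theta> \<psi>)"
      by (cases \<theta>') (auto intro!: integrable_pln_elbo_envelope[OF \<Theta>_spd A1 true_param \<Psi>_pos A2 _ _ \<open>(m', s') \<in> \<Psi>\<close>])
  qed
qed

end
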